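(* Let $d\ge1$ and let $(A_q)_{q\in\mathbb{N}}$ be a sequence of Lebesgue measurable subsets of $[0,1)^d$. Let $A$ be the set of pairs $(\mathbf{x},\boldsymbol\gamma)\in[0,1)^d\times[0,1)^d$ for which there exist infinitely many $q\in\mathbb{N}$ such that, for some $\mathbf{p}\in\mathbb{Z}^d$, $q\mathbf{x}-\boldsymbol\gamma-\mathbf{p}\in A_q$. Then $$\mu_{2d}(A)=\begin{cases}0,&\text{if }\sum_{r=1}^\infty\mu_d(A_r)<\infty,\\ 1,&\text{if }\sum_{r=1}^\infty\mu_d(A_r)=\infty,\end{cases}$$ where $\mu_s$ denotes $s$-dimensional Lebesgue measure. *)

theory Defs
  imports "HOL-Analysis.Analysis"
begin

definition unit_cube :: "(real ^ 'n) set" where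
  "unit_cube = {x. \<forall>i. 0 \<le> x $ i \<and> x $ i < 1}"

definition int_vecs :: "(real ^ 'n) set" where
  "int_vecs = {p. \<forall>i. p $ i \<in> \<int>}"

end

theory Submission
  imports Defs "HOL-Probability.Probability_Measure"
begin

(* For (x, gamma) in the unit cube squared, the pair is "hit at time q" when the fractional
   part of q x - gamma lies in the target A_q.  The key fact is that, for q <> q', the hit
   events are independent with respect to Lebesgue measure on [0,1)^d x [0,1)^d, and each
   has the measure of its target.  This rests on one computation: the average over the cube
   of x |-> f (t + k x) equals the average of f, for any Z^d-periodic f and nonzero integer k
   (compare both with an integral over space, by an affine substitution and by tiling space
   with lattice translates of the cube).

   A second-moment (Chebyshev) argument gives the Borel--Cantelli lemma for pairwise
   independent events; together with the classical first Borel--Cantelli lemma this yields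
   the zero-one law for Borel targets.  Lebesgue targets are squeezed between Borel sets
   differing by null sets, which changes the limsup set only by a null set. *)

section \<open>Fractional parts and the integer lattice\<close>

definition frac_vec :: "real ^ 'n \<Rightarrow> real ^ 'n" where
  "frac_vec v = (\<chi> i. frac (v $ i))"

definition int_vec :: "int ^ 'n \<Rightarrow> real ^ 'n" where
  "int_vec z = (\<chi> i. of_int (z $ i))"

lemma frac_vec_in_unit_cube: "frac_vec v \<in> unit_cube"
  by (simp add: frac_vec_def unit_cube_def frac_lt_1)

lemma int_vec_in_int_vecs: "int_vec z \<in> int_vecs"
  by (simp add: int_vec_def int_vecs_def)

lemma int_vec_inject: "int_vec z = int_vec w \<longleftrightarrow> z = w"
  by (simp add: int_vec_def vec_eq_iff)

lemma frac_vec_decomp: "v = frac_vec v + int_vec (\<chi> i. \<lfloor>v $ i\<rfloor>)"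
  by (simp add: vec_eq_iff frac_vec_def int_vec_def frac_def)

lemma frac_vec_unique: "u \<in> unit_cube \<Longrightarrow> v - u \<in> int_vecs \<Longrightarrow> frac_vec v = u"
  by (auto simp: vec_eq_iff frac_vec_def unit_cube_def int_vecs_def frac_unique_iff)

lemma frac_vec_add_int_vec [simp]: "frac_vec (v + int_vec z) = frac_vec v"
  by (simp add: vec_eq_iff frac_vec_def int_vec_def frac_add_int_right)

lemma frac_vec_cube: "x \<in> unit_cube \<Longrightarrow> frac_vec x = x"
  by (rule frac_vec_unique) (auto simp: int_vecs_def)

lemma ex_int_vecs_iff_frac_vec:
  assumes "S \<subseteq> unit_cube"
  shows "(\<exists>p\<in>int_vecs. v - p \<in> S) \<longleftrightarrow> frac_vec v \<in> S"
proof
  assume "\<exists>p\<in>int_vecs. v - p \<in> S"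
  then obtain p where p: "p \<in> int_vecs" "v - p \<in> S" by auto
  have "frac_vec v = v - p"
    by (rule frac_vec_unique) (use p assms in auto)
  with p show "frac_vec v \<in> S" by simp
next
  assume "frac_vec v \<in> S"
  moreover have "v - int_vec (\<chi> i. \<lfloor>v $ i\<rfloor>) = frac_vec v"
    using frac_vec_decomp[of v] by (simp add: algebra_simps)
  ultimately show "\<exists>p\<in>int_vecs. v - p \<in> S" using int_vec_in_int_vecs by metis
qed

lemma borel_measurable_vec_nth [measurable]: "(\<lambda>x::real^'n. x $ i) \<in> borel_measurable borel"
  by (intro borel_measurable_continuous_onI continuous_intros)

lemma borel_measurable_frac_vec [measurable]: "frac_vec \<in> borel_measurable borel"
proof (subst borel_measurable_euclidean_space, intro ballI)
  fix b :: "real ^ 'n" assume "b \<in> Basis"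
  then obtain i where b: "b = axis i 1" unfolding Basis_vec_def Basis_real_def by blast
  have "(\<lambda>x. frac_vec x \<bullet> b) = (\<lambda>x. x $ i - real_of_int \<lfloor>x $ i\<rfloor>)"
    by (simp add: b inner_axis frac_vec_def frac_def)
  then show "(\<lambda>x. frac_vec x \<bullet> b) \<in> borel_measurable borel" by simp
qed

lemma unit_cube_borel [measurable]: "unit_cube \<in> sets borel"
proof -
  have "unit_cube = (\<Inter>i. {x::real^'n. 0 \<le> x $ i} \<inter> {x. x $ i < 1})"
    by (auto simp: unit_cube_def)
  also have "\<dots> \<in> sets borel" by measurable
  finally show ?thesis .
qed

lemma One_vec_nth: "(One :: real ^ 'n) $ i = 1"
proof -
  have "axis i (1::real) \<in> Basis" unfolding Basis_vec_def Basis_real_def by blast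
  then have "(One :: real ^ 'n) \<bullet> axis i 1 = 1" by simp
  then show ?thesis by (simp add: cart_eq_inner_axis)
qed

lemma emeasure_unit_cube: "emeasure lborel (unit_cube :: (real ^ 'n) set) = 1"
proof (rule antisym)
  have "unit_cube \<subseteq> cbox (0 :: real ^ 'n) One"
    unfolding unit_cube_def subset_iff mem_box_cart One_vec_nth by (auto intro: less_imp_le)
  then have "emeasure lborel (unit_cube :: (real ^ 'n) set) \<le> emeasure lborel (cbox (0 :: real ^ 'n) One)"
    by (intro emeasure_mono) auto
  then show "emeasure lborel (unit_cube :: (real ^ 'n) set) \<le> 1"
    by (simp add: emeasure_lborel_cbox_eq)
  have "box (0 :: real ^ 'n) One \<subseteq> unit_cube"
    unfolding unit_cube_def subset_iff mem_box_cart One_vec_nth by (auto intro: less_imp_le)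
  then have "emeasure lborel (box (0 :: real ^ 'n) One) \<le> emeasure lborel (unit_cube :: (real ^ 'n) set)"
    by (intro emeasure_mono) auto
  then show "1 \<le> emeasure lborel (unit_cube :: (real ^ 'n) set)"
    by (simp add: emeasure_lborel_box_eq)
qed

lemma emeasure_subset_unit_cube:
  "S \<subseteq> unit_cube \<Longrightarrow> S \<in> sets borel \<Longrightarrow> emeasure lborel (S :: (real ^ 'n) set) \<le> 1"
  using emeasure_mono[of S "unit_cube :: (real ^ 'n) set" lborel] by (simp add: emeasure_unit_cube)

lemma emeasure_unit_cube_square:
  "emeasure lborel ((unit_cube :: (real ^ 'n) set) \<times> (unit_cube :: (real ^ 'm) set)) = 1"
proof -
  have "emeasure lborel ((unit_cube :: (real ^ 'n) set) \<times> (unit_cube :: (real ^ 'm) set))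
      = emeasure lborel (unit_cube :: (real ^ 'n) set) * emeasure lborel (unit_cube :: (real ^ 'm) set)"
    unfolding lborel_prod[symmetric] by (rule lborel.emeasure_pair_measure_Times) auto
  then show ?thesis by (simp add: emeasure_unit_cube)
qed

lemma emeasure_lborel_pair_iterated:
  fixes X :: "('a :: euclidean_space \<times> 'b :: euclidean_space) set"
  assumes [measurable]: "X \<in> sets borel"
  shows "emeasure lborel X = (\<integral>\<^sup>+ x. \<integral>\<^sup>+ y. indicator X (x, y) \<partial>lborel \<partial>lborel)"
proof -
  have "emeasure lborel X = (\<integral>\<^sup>+ p. indicator X p \<partial>(lborel \<Otimes>\<^sub>M lborel))"
    by (simp add: lborel_prod)
  also have "\<dots> = (\<integral>\<^sup>+ x. \<integral>\<^sup>+ y. indicator X (x, y) \<partial>lborel \<partial>lborel)"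
    by (rule lborel.nn_integral_fst[symmetric]) (simp add: lborel_prod)
  finally show ?thesis .
qed

lemma nn_integral_lborel_affine:
  fixes h :: "real ^ 'n \<Rightarrow> ennreal"
  assumes [measurable]: "h \<in> borel_measurable borel" and c: "c \<noteq> 0"
  shows "(\<integral>\<^sup>+ x. h x \<partial>lborel) = ennreal (\<bar>c\<bar> ^ CARD('n)) * (\<integral>\<^sup>+ x. h (t + c *\<^sub>R x) \<partial>lborel)"
proof -
  have [measurable]: "(\<lambda>x::real^'n. t + c *\<^sub>R x) \<in> borel_measurable borel" by simp
  have "(\<integral>\<^sup>+ x. h x \<partial>lborel)
      = (\<integral>\<^sup>+ x. h x \<partial>density (distr lborel borel (\<lambda>x. t + c *\<^sub>R x)) (\<lambda>_. \<bar>c\<bar> ^ DIM(real^'n)))"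
    using lborel_affine[OF c, of t] by simp
  also have "\<dots> = (\<integral>\<^sup>+ x. ennreal (\<bar>c\<bar> ^ DIM(real^'n)) * h (t + c *\<^sub>R x) \<partial>lborel)"
    by (simp add: nn_integral_density nn_integral_distr)
  also have "\<dots> = ennreal (\<bar>c\<bar> ^ CARD('n)) * (\<integral>\<^sup>+ x. h (t + c *\<^sub>R x) \<partial>lborel)"
    by (subst nn_integral_cmult) auto
  finally show ?thesis .
qed

section \<open>The unit cube tiles space under lattice translations\<close>

text \<open>A fixed enumeration of the lattice \<open>\<int>\<^sup>d\<close>, used to write sums over lattice points
  as series.\<close>
definition lattice_enum :: "nat \<Rightarrow> int ^ 'n" where
  "lattice_enum = from_nat_into UNIV"

lemma bij_lattice_enum: "bij (lattice_enum :: nat \<Rightarrow> int ^ 'n)"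
  unfolding lattice_enum_def
  by (rule bij_betw_from_nat_into) (simp_all add: infinite_UNIV_vec)

lemma suminf_indicator_unit_cube_translates:
  fixes y :: "real ^ 'n"
  shows "(\<Sum>k. indicator unit_cube (y - int_vec (lattice_enum k)) :: ennreal) = 1"
proof -
  define k0 where "k0 = inv lattice_enum (\<chi> i. \<lfloor>y $ i\<rfloor>)"
  have k0: "y - int_vec (lattice_enum k0) = frac_vec y"
    using frac_vec_decomp[of y] bij_is_surj[OF bij_lattice_enum] unfolding k0_def
    by (metis add_diff_cancel_right' surj_f_inv_f)
  have "indicator unit_cube (y - int_vec (lattice_enum k)) = (0::ennreal)" if "k \<noteq> k0" for k
  proof (rule ccontr)
    assume "indicator unit_cube (y - int_vec (lattice_enum k)) \<noteq> (0::ennreal)"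
    then have "y - int_vec (lattice_enum k) \<in> unit_cube" by (auto split: split_indicator_asm)
    then have "frac_vec y = y - int_vec (lattice_enum k)"
      by (intro frac_vec_unique) (simp_all add: int_vec_in_int_vecs)
    then have "lattice_enum k = (lattice_enum k0 :: int ^ 'n)"
      using k0 by (simp add: int_vec_inject)
    with that bij_lattice_enum show False by (metis bij_pointE)
  qed
  then have "(\<Sum>k. indicator unit_cube (y - int_vec (lattice_enum k)) :: ennreal)
      = (\<Sum>k\<in>{k0}. indicator unit_cube (y - int_vec (lattice_enum k)))"
    by (intro suminf_finite) auto
  also have "\<dots> = 1" using k0 frac_vec_in_unit_cube[of y] by simp
  finally show ?thesis .
qed

lemma nn_integral_lattice_tiling:
  fixes g :: "real ^ 'n \<Rightarrow> ennreal"
  assumes [measurable]: "g \<in> borel_measurable borel"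
  shows "(\<integral>\<^sup>+ y. g y \<partial>lborel)
    = (\<Sum>k. \<integral>\<^sup>+ x. g (x + int_vec (lattice_enum k)) * indicator unit_cube x \<partial>lborel)"
proof -
  have "(\<integral>\<^sup>+ y. g y \<partial>lborel)
      = (\<integral>\<^sup>+ y. (\<Sum>k. g y * indicator unit_cube (y - int_vec (lattice_enum k))) \<partial>lborel)"
    by (simp add: suminf_indicator_unit_cube_translates)
  also have "\<dots> = (\<Sum>k. \<integral>\<^sup>+ y. g y * indicator unit_cube (y - int_vec (lattice_enum k)) \<partial>lborel)"
    by (rule nn_integral_suminf) measurable
  also have "\<dots> = (\<Sum>k. \<integral>\<^sup>+ x. g (x + int_vec (lattice_enum k)) * indicator unit_cube x \<partial>lborel)"
  proof (rule suminf_cong)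
    fix k
    show "(\<integral>\<^sup>+ y. g y * indicator unit_cube (y - int_vec (lattice_enum k)) \<partial>lborel)
        = (\<integral>\<^sup>+ x. g (x + int_vec (lattice_enum k)) * indicator unit_cube x \<partial>lborel)"
      using nn_integral_lborel_affine[of "\<lambda>y. g y * indicator unit_cube (y - int_vec (lattice_enum k))"
          1 "int_vec (lattice_enum k)"]
      by (simp add: add.commute)
  qed
  finally show ?thesis .
qed

section \<open>Counting lattice points in a dilated cube\<close>

lemma int_window_eq:
  fixes k :: int and b :: real
  assumes "k > 0"
  shows "{m::int. 0 \<le> b + m \<and> b + m < k} = {\<lceil>-b\<rceil> ..< \<lceil>-b\<rceil> + k}"
proof -
  have "0 \<le> b + m \<and> b + m < k \<longleftrightarrow> \<lceil>-b\<rceil> \<le> m \<and> m - k < \<lceil>-b\<rceil>" for m :: int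
    by (simp add: ceiling_le_iff less_ceiling_iff algebra_simps) linarith
  then show ?thesis by (simp add: set_eq_iff algebra_simps)
qed

lemma card_int_dilated_window:
  fixes k :: int and b :: real
  assumes "k \<noteq> 0"
  defines "W \<equiv> {m::int. 0 \<le> (b + m) / k \<and> (b + m) / k < 1}"
  shows "finite W \<and> card W = nat \<bar>k\<bar>"
proof -
  have unit_interval: "0 \<le> x / c \<and> x / c < 1 \<longleftrightarrow> 0 \<le> x \<and> x < c" if "c > 0" for x c :: real
    using that by (simp add: zero_le_divide_iff)
  show ?thesis
  proof (cases "k > 0")
    case True
    then have "W = {\<lceil>-b\<rceil> ..< \<lceil>-b\<rceil> + k}"
      using int_window_eq[OF True, of b] unit_interval[of k] by (simp add: W_def)
    then show ?thesis using True by simp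
  next
    case False
    then have neg: "k < 0" using assms(1) by simp
    define V where "V = {m::int. 0 \<le> - b + m \<and> - b + m < - k}"
    have "0 \<le> (b + m) / k \<longleftrightarrow> b + m \<le> 0" "(b + m) / k < 1 \<longleftrightarrow> k < b + m" for m :: int
      using neg by (simp_all add: zero_le_divide_iff neg_divide_less_eq)
    then have mem: "m \<in> W \<longleftrightarrow> - m \<in> V" for m
      unfolding W_def V_def by auto
    have bij: "bij_betw uminus V W"
      by (intro bij_betw_byWitness[where f'=uminus]) (auto simp: mem)
    have "V = {\<lceil>b\<rceil> ..< \<lceil>b\<rceil> - k}"
      using int_window_eq[of "- k" "- b"] neg unfolding V_def by simp
    then show ?thesis
      using neg bij_betw_finite[OF bij] bij_betw_same_card[OF bij] by simp
  qed
qed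

lemma card_lattice_points_dilated_cube:
  fixes k :: int and a :: "real ^ 'n"
  assumes k: "k \<noteq> 0"
  defines "Z \<equiv> {z :: int ^ 'n. (1 / real_of_int k) *\<^sub>R (a + int_vec z) \<in> unit_cube}"
  shows "finite Z" "card Z = nat \<bar>k\<bar> ^ CARD('n)"
proof -
  define W where "W i = {m::int. 0 \<le> (a $ i + m) / k \<and> (a $ i + m) / k < 1}" for i
  have "Z = {z. \<forall>i. z $ i \<in> W i}"
    by (simp add: Z_def unit_cube_def W_def int_vec_def)
  then have bij: "bij_betw vec_nth Z (Pi\<^sub>E UNIV W)"
    by (intro bij_betw_byWitness[where f'=vec_lambda]) (auto simp: vec_lambda_inverse)
  have "finite (W i)" "card (W i) = nat \<bar>k\<bar>" for i
    using card_int_dilated_window[OF k] unfolding W_def by auto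
  then have "finite (Pi\<^sub>E (UNIV :: 'n set) W)" "card (Pi\<^sub>E (UNIV :: 'n set) W) = nat \<bar>k\<bar> ^ CARD('n)"
    by (simp_all add: finite_PiE card_PiE)
  then show "finite Z" "card Z = nat \<bar>k\<bar> ^ CARD('n)"
    using bij_betw_finite[OF bij] bij_betw_same_card[OF bij] by simp_all
qed

lemma suminf_indicator_dilated_cube:
  fixes k :: int and a :: "real ^ 'n"
  assumes k: "k \<noteq> 0"
  shows "(\<Sum>j. indicator unit_cube ((1 / real_of_int k) *\<^sub>R (a + int_vec (lattice_enum j))) :: ennreal)
     = ennreal (\<bar>real_of_int k\<bar> ^ CARD('n))"
proof -
  define Z where "Z = {z :: int ^ 'n. (1 / real_of_int k) *\<^sub>R (a + int_vec z) \<in> unit_cube}"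
  define N where "N = lattice_enum -` Z"
  have bN: "bij_betw lattice_enum N Z"
    using bij_lattice_enum unfolding N_def bij_betw_def
    by (metis inj_on_subset subset_UNIV surj_image_vimage_eq)
  have fN: "finite N"
    using bij_betw_finite[OF bN] card_lattice_points_dilated_cube(1)[OF k] unfolding Z_def by simp
  have "(\<Sum>j. indicator unit_cube ((1 / real_of_int k) *\<^sub>R (a + int_vec (lattice_enum j))) :: ennreal)
      = (\<Sum>j\<in>N. indicator unit_cube ((1 / real_of_int k) *\<^sub>R (a + int_vec (lattice_enum j))))"
    by (rule suminf_finite[OF fN]) (auto simp: N_def Z_def)
  also have "\<dots> = (\<Sum>j\<in>N. 1)"
    by (intro sum.cong) (auto simp: N_def Z_def)
  also have "\<dots> = of_nat (card Z)" using bij_betw_same_card[OF bN] by simp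
  also have "\<dots> = ennreal (real (nat \<bar>k\<bar> ^ CARD('n)))"
    using card_lattice_points_dilated_cube(2)[OF k, of a] unfolding Z_def
    by (simp add: ennreal_of_nat_eq_real_of_nat)
  also have "real (nat \<bar>k\<bar> ^ CARD('n)) = \<bar>real_of_int k\<bar> ^ CARD('n)"
    by simp
  finally show ?thesis .
qed

section \<open>Integrals of lattice-periodic functions\<close>

text \<open>Both sides are compared with \<open>\<integral> f(y) \<one>\<^sub>Q((y - t)/k) dy\<close> (\<open>Q\<close> the unit cube):
  the affine substitution \<open>y = t + k x\<close> gives \<open>|k|\<^sup>d\<close> times the left side, while
  cutting space into lattice translates of \<open>Q\<close> gives \<open>|k|\<^sup>d\<close> times the right side,
  because every point of \<open>Q\<close> has \<open>|k|\<^sup>d\<close> lattice translates in \<open>t + k Q\<close>.\<close>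
lemma nn_integral_periodic_dilation:
  fixes f :: "real ^ 'n \<Rightarrow> ennreal" and k :: int and t :: "real ^ 'n"
  assumes [measurable]: "f \<in> borel_measurable borel"
    and periodic: "\<And>v z. f (v + int_vec z) = f v" and k: "k \<noteq> 0"
  shows "(\<integral>\<^sup>+ x. f (t + real_of_int k *\<^sub>R x) * indicator unit_cube x \<partial>lborel)
       = (\<integral>\<^sup>+ x. f x * indicator unit_cube x \<partial>lborel)"
proof -
  define c where "c = real_of_int k"
  have c: "c \<noteq> 0" using k by (simp add: c_def)
  define K where "K = ennreal (\<bar>c\<bar> ^ CARD('n))"
  have K: "K \<noteq> 0" "K \<noteq> \<infinity>" using c by (simp_all add: K_def)
  define \<phi> where "\<phi> y = f y * indicator unit_cube ((1 / c) *\<^sub>R (y - t))" for y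
  have [measurable]: "\<phi> \<in> borel_measurable borel" unfolding \<phi>_def by measurable
  have "(\<integral>\<^sup>+ y. \<phi> y \<partial>lborel) = K * (\<integral>\<^sup>+ x. \<phi> (t + c *\<^sub>R x) \<partial>lborel)"
    unfolding K_def by (rule nn_integral_lborel_affine) (use c in auto)
  also have "(\<lambda>x. \<phi> (t + c *\<^sub>R x)) = (\<lambda>x. f (t + real_of_int k *\<^sub>R x) * indicator unit_cube x)"
    using c by (simp add: \<phi>_def c_def)
  finally have by_substitution: "(\<integral>\<^sup>+ y. \<phi> y \<partial>lborel)
      = K * (\<integral>\<^sup>+ x. f (t + real_of_int k *\<^sub>R x) * indicator unit_cube x \<partial>lborel)" .
  have "(\<integral>\<^sup>+ y. \<phi> y \<partial>lborel) = (\<Sum>j. \<integral>\<^sup>+ x. \<phi> (x + int_vec (lattice_enum j)) * indicator unit_cube x \<partial>lborel)"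
    by (rule nn_integral_lattice_tiling) measurable
  also have "\<dots> = (\<Sum>j. \<integral>\<^sup>+ x. f x * indicator unit_cube x
      * indicator unit_cube ((1 / c) *\<^sub>R ((x - t) + int_vec (lattice_enum j))) \<partial>lborel)"
    by (intro suminf_cong nn_integral_cong) (simp add: \<phi>_def periodic algebra_simps)
  also have "\<dots> = (\<integral>\<^sup>+ x. (\<Sum>j. f x * indicator unit_cube x
      * indicator unit_cube ((1 / c) *\<^sub>R ((x - t) + int_vec (lattice_enum j)))) \<partial>lborel)"
    by (rule nn_integral_suminf[symmetric]) measurable
  also have "\<dots> = (\<integral>\<^sup>+ x. f x * indicator unit_cube x * K \<partial>lborel)"
  proof (rule nn_integral_cong)
    fix x :: "real ^ 'n"
    have "(\<Sum>j. indicator unit_cube ((1 / c) *\<^sub>R ((x - t) + int_vec (lattice_enum j))) :: ennreal) = K"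
      using suminf_indicator_dilated_cube[OF k, of "x - t"] by (simp add: K_def c_def)
    then show "(\<Sum>j. f x * indicator unit_cube x
        * indicator unit_cube ((1 / c) *\<^sub>R ((x - t) + int_vec (lattice_enum j)))) = f x * indicator unit_cube x * K"
      by simp
  qed
  also have "\<dots> = K * (\<integral>\<^sup>+ x. f x * indicator unit_cube x \<partial>lborel)"
    by (subst nn_integral_multc) (auto simp: mult.commute)
  finally have by_tiling: "(\<integral>\<^sup>+ y. \<phi> y \<partial>lborel) = K * (\<integral>\<^sup>+ x. f x * indicator unit_cube x \<partial>lborel)" .
  from by_substitution by_tiling K show ?thesis
    by (simp add: ennreal_mult_cancel_left)
qed

section \<open>Hit sets and their independence\<close>

definition hit_set :: "int \<Rightarrow> (real ^ 'n) set \<Rightarrow> ((real ^ 'n) \<times> (real ^ 'n)) set" where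
  "hit_set q S = {(x, \<gamma>). x \<in> unit_cube \<and> \<gamma> \<in> unit_cube \<and> frac_vec (real_of_int q *\<^sub>R x - \<gamma>) \<in> S}"

lemma hit_set_subset: "hit_set q S \<subseteq> unit_cube \<times> unit_cube"
  by (auto simp: hit_set_def)

lemma hit_set_mono: "S \<subseteq> S' \<Longrightarrow> hit_set q S \<subseteq> hit_set q S'"
  by (auto simp: hit_set_def)

lemma hit_set_Diff: "hit_set q (S - S') = hit_set q S - hit_set q S'"
  by (auto simp: hit_set_def)

lemma hit_set_unit_cube: "hit_set q unit_cube = unit_cube \<times> unit_cube"
  by (auto simp: hit_set_def frac_vec_in_unit_cube)

lemma hit_set_borel [measurable]:
  assumes [measurable]: "S \<in> sets borel"
  shows "hit_set q S \<in> sets borel"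
proof -
  have "hit_set q S = (unit_cube \<times> unit_cube) \<inter> (\<lambda>p. frac_vec (real_of_int q *\<^sub>R fst p - snd p)) -` S"
    by (auto simp: hit_set_def)
  also have "\<dots> \<in> sets borel"
    by (intro sets.Int borel_Times measurable_sets_borel[OF measurable_compose[OF _ borel_measurable_frac_vec]]
        borel_measurable_continuous_onI continuous_intros) auto
  finally show ?thesis .
qed

lemma nn_integral_indicator_frac_dilation:
  fixes S :: "(real ^ 'n) set" and k :: int
  assumes [measurable]: "S \<in> sets borel" and S: "S \<subseteq> unit_cube" and k: "k \<noteq> 0"
  shows "(\<integral>\<^sup>+ x. indicator S (frac_vec (w + real_of_int k *\<^sub>R x)) * indicator unit_cube x \<partial>lborel)
    = emeasure lborel S"
proof -
  define g where "g v = (indicator S (frac_vec v) :: ennreal)" for v :: "real ^ 'n"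
  have [measurable]: "g \<in> borel_measurable borel" unfolding g_def by measurable
  have "(\<integral>\<^sup>+ x. g (w + real_of_int k *\<^sub>R x) * indicator unit_cube x \<partial>lborel)
      = (\<integral>\<^sup>+ x. g x * indicator unit_cube x \<partial>lborel)"
    by (rule nn_integral_periodic_dilation[OF _ _ k]) (simp_all add: g_def)
  also have "\<dots> = emeasure lborel S"
    using S by (auto intro!: nn_integral_cong simp: g_def indicator_def frac_vec_cube
        simp flip: nn_integral_indicator)
  finally show ?thesis by (simp add: g_def)
qed

text \<open>The \<open>\<gamma>\<close>-section of the intersection of two hit sets: after the substitution
  \<open>w = frac (q x - \<gamma>)\<close> (the periodicity lemma with \<open>k = -1\<close>), the second condition reads
  \<open>frac (w + (q' - q) x) \<in> S'\<close>.\<close>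
lemma nn_integral_hit_set_Int_section:
  fixes S S' :: "(real ^ 'n) set"
  assumes [measurable]: "S \<in> sets borel" "S' \<in> sets borel" and S: "S \<subseteq> unit_cube"
  shows "(\<integral>\<^sup>+ \<gamma>. indicator (hit_set q S \<inter> hit_set q' S') (x, \<gamma>) \<partial>lborel)
    = (\<integral>\<^sup>+ w. indicator unit_cube x * indicator S w
        * indicator S' (frac_vec (w + real_of_int (q' - q) *\<^sub>R x)) \<partial>lborel)"
proof -
  define k where "k = q' - q"
  define h where "h w = (indicator S (frac_vec w)
      * indicator S' (frac_vec (w + real_of_int k *\<^sub>R x)) :: ennreal)" for w
  have [measurable]: "h \<in> borel_measurable borel" unfolding h_def by measurable
  have h_periodic: "h (w + int_vec z) = h w" for w z
  proof -
    have "w + int_vec z + real_of_int k *\<^sub>R x = (w + real_of_int k *\<^sub>R x) + int_vec z"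
      by (simp add: algebra_simps)
    then show ?thesis by (simp only: h_def frac_vec_add_int_vec)
  qed
  have shift: "real_of_int q *\<^sub>R x - \<gamma> + real_of_int k *\<^sub>R x = real_of_int q' *\<^sub>R x - \<gamma>"
    for \<gamma> :: "real ^ 'n"
    by (simp add: k_def algebra_simps)
  have "(\<integral>\<^sup>+ \<gamma>. indicator (hit_set q S \<inter> hit_set q' S') (x, \<gamma>) \<partial>lborel)
      = (\<integral>\<^sup>+ \<gamma>. indicator unit_cube x
          * (h (real_of_int q *\<^sub>R x + real_of_int (- 1) *\<^sub>R \<gamma>) * indicator unit_cube \<gamma>) \<partial>lborel)"
    by (intro nn_integral_cong) (auto simp: hit_set_def h_def indicator_def shift)
  also have "\<dots> = indicator unit_cube x * (\<integral>\<^sup>+ \<gamma>.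
      h (real_of_int q *\<^sub>R x + real_of_int (- 1) *\<^sub>R \<gamma>) * indicator unit_cube \<gamma> \<partial>lborel)"
    by (rule nn_integral_cmult) measurable
  also have "(\<integral>\<^sup>+ \<gamma>. h (real_of_int q *\<^sub>R x + real_of_int (- 1) *\<^sub>R \<gamma>) * indicator unit_cube \<gamma> \<partial>lborel)
      = (\<integral>\<^sup>+ w. h w * indicator unit_cube w \<partial>lborel)"
    by (rule nn_integral_periodic_dilation) (simp_all add: h_periodic)
  also have "indicator unit_cube x * (\<integral>\<^sup>+ w. h w * indicator unit_cube w \<partial>lborel)
      = (\<integral>\<^sup>+ w. indicator unit_cube x * (h w * indicator unit_cube w) \<partial>lborel)"
    by (rule nn_integral_cmult[symmetric]) measurable
  also have "\<dots> = (\<integral>\<^sup>+ w. indicator unit_cube x * indicator S w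
      * indicator S' (frac_vec (w + real_of_int k *\<^sub>R x)) \<partial>lborel)"
    using S by (intro nn_integral_cong) (auto simp: h_def indicator_def frac_vec_cube)
  finally show ?thesis by (simp only: k_def)
qed

text \<open>Integrate out \<open>\<gamma>\<close> first, swap the order of integration, and evaluate
  the \<open>x\<close>-integral by measure preservation of \<open>x \<mapsto> frac (w + (q' - q) x)\<close>.\<close>
lemma emeasure_hit_set_Int:
  fixes S S' :: "(real ^ 'n) set"
  assumes [measurable]: "S \<in> sets borel" "S' \<in> sets borel"
    and S: "S \<subseteq> unit_cube" and S': "S' \<subseteq> unit_cube" and "q \<noteq> q'"
  shows "emeasure lborel (hit_set q S \<inter> hit_set q' S') = emeasure lborel S * emeasure lborel S'"
proof -
  define F where "F x w = (indicator unit_cube x * indicator S w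
      * indicator S' (frac_vec (w + real_of_int (q' - q) *\<^sub>R x)) :: ennreal)" for x w :: "real ^ 'n"
  have "(\<lambda>(x, w). F x w) \<in> borel_measurable (borel \<Otimes>\<^sub>M borel)"
    unfolding F_def by measurable
  then have F_measurable: "(\<lambda>(x, w). F x w) \<in> borel_measurable (lborel \<Otimes>\<^sub>M lborel)"
    by (simp add: lborel_prod borel_prod)
  have integrate_x: "(\<integral>\<^sup>+ x. F x w \<partial>lborel) = indicator S w * emeasure lborel S'" for w
  proof -
    have "(\<integral>\<^sup>+ x. F x w \<partial>lborel) = indicator S w
        * (\<integral>\<^sup>+ x. indicator S' (frac_vec (w + real_of_int (q' - q) *\<^sub>R x)) * indicator unit_cube x \<partial>lborel)"
      by (subst nn_integral_cmult[symmetric]) (auto intro!: nn_integral_cong simp: F_def mult_ac)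
    also have "\<dots> = indicator S w * emeasure lborel S'"
      using \<open>q \<noteq> q'\<close> by (subst nn_integral_indicator_frac_dilation[OF assms(2) S']) simp_all
    finally show ?thesis .
  qed
  have "emeasure lborel (hit_set q S \<inter> hit_set q' S') = (\<integral>\<^sup>+ x. \<integral>\<^sup>+ w. F x w \<partial>lborel \<partial>lborel)"
    using S by (simp add: emeasure_lborel_pair_iterated nn_integral_hit_set_Int_section F_def)
  also have "\<dots> = (\<integral>\<^sup>+ w. \<integral>\<^sup>+ x. F x w \<partial>lborel \<partial>lborel)"
    by (rule lborel_pair.Fubini'[OF F_measurable, symmetric])
  also have "\<dots> = emeasure lborel S * emeasure lborel S'"
    by (simp add: integrate_x nn_integral_multc)
  finally show ?thesis .
qed

lemma emeasure_hit_set: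
  fixes S :: "(real ^ 'n) set"
  assumes "S \<in> sets borel" "S \<subseteq> unit_cube"
  shows "emeasure lborel (hit_set q S) = emeasure lborel S"
proof -
  have "hit_set q S = hit_set q S \<inter> hit_set (q + 1) unit_cube"
    using hit_set_subset[of q S] by (auto simp: hit_set_unit_cube)
  then show ?thesis
    using emeasure_hit_set_Int[of S unit_cube q "q + 1"] assms by (simp add: emeasure_unit_cube)
qed

section \<open>The second Borel--Cantelli lemma for pairwise independent events\<close>

context prob_space
begin

lemma expectation_centered_indicators:
  assumes "A \<in> events" "B \<in> events"
  shows "integrable M (\<lambda>x. (indicator A x - prob A) * (indicator B x - prob B) :: real)"
    and "expectation (\<lambda>x. (indicator A x - prob A) * (indicator B x - prob B))
      = prob (A \<inter> B) - prob A * prob B"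
proof -
  have expand: "(indicator A x - prob A) * (indicator B x - prob B)
      = indicator (A \<inter> B) x - prob B * indicator A x - prob A * indicator B x + prob A * prob B"
    for x :: 'a
    by (simp add: indicator_inter_arith algebra_simps)
  have [simp]: "integrable M (indicator C :: 'a \<Rightarrow> real)" if "C \<in> events" for C
    using that by (intro integrable_real_indicator) (auto simp: emeasure_eq_measure)
  show "integrable M (\<lambda>x. (indicator A x - prob A) * (indicator B x - prob B) :: real)"
    unfolding expand using assms by simp
  show "expectation (\<lambda>x. (indicator A x - prob A) * (indicator B x - prob B))
      = prob (A \<inter> B) - prob A * prob B"
    unfolding expand using assms by (simp add: prob_space)
qed

text \<open>The variance of the number of occurring events is at most \<open>s\<close>, and on the
  event that none occurs, this number deviates from its mean by \<open>s\<close>.\<close>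
lemma prob_none_pairwise_independent:
  assumes ev: "\<And>i. Ev i \<in> events"
    and indep: "\<And>i j. i \<noteq> j \<Longrightarrow> prob (Ev i \<inter> Ev j) = prob (Ev i) * prob (Ev j)"
    and F: "finite F"
  defines "s \<equiv> (\<Sum>i\<in>F. prob (Ev i))"
  shows "s\<^sup>2 * prob {x \<in> space M. \<forall>i\<in>F. x \<notin> Ev i} \<le> s"
proof -
  define c where "c i x = indicator (Ev i) x - prob (Ev i)" for i x
  define none where "none = {x \<in> space M. \<forall>i\<in>F. x \<notin> Ev i}"
  have none: "none \<in> events"
    unfolding none_def using ev F by measurable
  have square: "(\<Sum>i\<in>F. c i x)\<^sup>2 = (\<Sum>i\<in>F. \<Sum>j\<in>F. c i x * c j x)" for x
    by (simp add: power2_eq_square sum_product)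
  have integrable_cc: "integrable M (\<lambda>x. c i x * c j x)" for i j
    unfolding c_def by (rule expectation_centered_indicators(1)[OF ev ev])
  have "s\<^sup>2 * prob none = expectation (\<lambda>x. s\<^sup>2 * indicator none x)"
    using none by simp
  also have "\<dots> \<le> expectation (\<lambda>x. (\<Sum>i\<in>F. c i x)\<^sup>2)"
  proof (rule integral_mono)
    show "integrable M (\<lambda>x. s\<^sup>2 * indicator none x)"
      using none by (intro integrable_mult_right integrable_real_indicator) (auto simp: emeasure_eq_measure)
    show "integrable M (\<lambda>x. (\<Sum>i\<in>F. c i x)\<^sup>2)"
      unfolding square using integrable_cc by auto
    show "s\<^sup>2 * indicator none x \<le> (\<Sum>i\<in>F. c i x)\<^sup>2" for x
    proof (cases "x \<in> none")
      case True
      then have "(\<Sum>i\<in>F. c i x) = - s"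
        by (simp add: c_def s_def none_def sum_negf[symmetric])
      then show ?thesis using True by simp
    qed simp
  qed
  also have "\<dots> = (\<Sum>i\<in>F. \<Sum>j\<in>F. expectation (\<lambda>x. c i x * c j x))"
    unfolding square by (simp add: integrable_cc)
  also have "\<dots> = (\<Sum>i\<in>F. \<Sum>j\<in>F. prob (Ev i \<inter> Ev j) - prob (Ev i) * prob (Ev j))"
    unfolding c_def by (simp add: expectation_centered_indicators(2)[OF ev ev])
  also have "\<dots> = (\<Sum>i\<in>F. \<Sum>j\<in>F. if i = j then prob (Ev i) - (prob (Ev i))\<^sup>2 else 0)"
    by (intro sum.cong refl) (simp add: indep power2_eq_square)
  also have "\<dots> = (\<Sum>i\<in>F. prob (Ev i) - (prob (Ev i))\<^sup>2)"
    using F by simp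
  also have "\<dots> \<le> s"
    unfolding s_def by (intro sum_mono) simp
  finally show ?thesis unfolding none_def .
qed

text \<open>If the probabilities of pairwise independent events are not summable, then almost
  surely some event occurs after any given index \<open>m\<close>: by the Chebyshev-type bound, the
  probability that none of \<open>Ev m, \<dots>, Ev (N - 1)\<close> occurs is at most the reciprocal of
  their probability sum, which is unbounded in \<open>N\<close>.\<close>
lemma prob_none_after_pairwise_independent:
  assumes ev: "\<And>n. Ev n \<in> events"
    and indep: "\<And>i j. i \<noteq> j \<Longrightarrow> prob (Ev i \<inter> Ev j) = prob (Ev i) * prob (Ev j)"
    and diverges: "\<not> summable (\<lambda>n. prob (Ev n))"
  shows "prob (space M - (\<Union>n\<in>{m..}. Ev n)) = 0"
proof -
  define none where "none = space M - (\<Union>n\<in>{m..}. Ev n)"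
  have small: "prob none \<le> e" if "e > 0" for e
  proof -
    have "\<not> (\<forall>N. (\<Sum>i<N. prob (Ev i)) \<le> (\<Sum>i<m. prob (Ev i)) + 1 / e)"
      using diverges summableI_nonneg_bounded[of "\<lambda>n. prob (Ev n)"] by (meson measure_nonneg)
    then obtain N where N: "(\<Sum>i<m. prob (Ev i)) + 1 / e < (\<Sum>i<N. prob (Ev i))"
      by (auto simp: not_le)
    have "0 < 1 / e" using \<open>e > 0\<close> by simp
    define s where "s = (\<Sum>i\<in>{m..<N}. prob (Ev i))"
    have "m \<le> N"
    proof (rule ccontr)
      assume "\<not> m \<le> N"
      then have "(\<Sum>i<N. prob (Ev i)) \<le> (\<Sum>i<m. prob (Ev i))"
        by (intro sum_mono2) auto
      with N \<open>0 < 1 / e\<close> show False by linarith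
    qed
    then have "(\<Sum>i<N. prob (Ev i)) = (\<Sum>i<m. prob (Ev i)) + s"
      unfolding s_def by (metis atLeast0LessThan sum.atLeastLessThan_concat zero_le)
    then have s: "1 / e < s" "0 < s" using N \<open>0 < 1 / e\<close> by linarith+
    have "prob none \<le> prob {x \<in> space M. \<forall>i\<in>{m..<N}. x \<notin> Ev i}"
      unfolding none_def using ev by (intro finite_measure_mono) auto
    also have "\<dots> \<le> 1 / s"
      using prob_none_pairwise_independent[where Ev=Ev and F="{m..<N}", OF ev indep] s
      unfolding s_def by (simp add: field_simps power2_eq_square)
    also have "\<dots> \<le> e"
      using s \<open>e > 0\<close> by (simp add: field_simps)
    finally show ?thesis .
  qed
  show ?thesis
    using small[of "prob none / 2"] measure_nonneg[of M none] unfolding none_def by linarith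
qed

lemma pairwise_independent_borel_cantelli:
  assumes ev: "\<And>n. Ev n \<in> events"
    and indep: "\<And>i j. i \<noteq> j \<Longrightarrow> prob (Ev i \<inter> Ev j) = prob (Ev i) * prob (Ev j)"
    and diverges: "\<not> summable (\<lambda>n. prob (Ev n))"
  shows "emeasure M (limsup Ev) = 1"
proof -
  have "AE x in M. \<exists>n\<ge>m. x \<in> Ev n" for m
  proof -
    have "AE x in M. x \<notin> space M - (\<Union>n\<in>{m..}. Ev n)"
      using prob_none_after_pairwise_independent[where Ev=Ev, OF ev indep diverges] ev
      by (subst prob_eq_0[symmetric]) measurable
    with AE_space show ?thesis by eventually_elim auto
  qed
  then have "AE x in M. \<forall>m. \<exists>n\<ge>m. x \<in> Ev n"
    by (simp add: AE_all_countable)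
  then have "AE x in M. x \<in> limsup Ev"
    by (simp add: mem_limsup_iff frequently_sequentially)
  then show ?thesis
    using ev by (intro emeasure_eq_1_AE) measurable
qed

end

section \<open>The zero--one law for Borel targets\<close>

lemma summable_measure_iff:
  assumes "\<And>n. emeasure M (A n) \<noteq> \<infinity>"
  shows "summable (\<lambda>n. measure M (A n)) \<longleftrightarrow> (\<Sum>n. emeasure M (A n)) < \<infinity>"
proof -
  have "(\<Sum>n. emeasure M (A n)) = (\<Sum>n. ennreal (measure M (A n)))"
    using emeasure_eq_ennreal_measure[OF assms[unfolded infinity_ennreal_def]] by simp
  moreover have "summable (\<lambda>n. measure M (A n)) \<longleftrightarrow> (\<Sum>n. ennreal (measure M (A n))) \<noteq> top"
    using summable_suminf_not_top[of "\<lambda>n. measure M (A n)"]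
      ennreal_suminf_neq_top[of "\<lambda>n. measure M (A n)"] by (metis measure_nonneg)
  ultimately show ?thesis
    by (simp only: infinity_ennreal_def less_top)
qed

lemma emeasure_hit_set_finite:
  fixes S :: "(real ^ 'n) set"
  assumes "S \<in> sets borel" "S \<subseteq> unit_cube"
  shows "emeasure lborel (hit_set q S) \<noteq> \<infinity>"
  using emeasure_subset_unit_cube[OF assms(2,1)] unfolding emeasure_hit_set[OF assms]
  by (metis ennreal_one_neq_top infinity_ennreal_def neq_top_trans)

lemma emeasure_limsup_hit_sets_0:
  fixes T :: "nat \<Rightarrow> (real ^ 'n) set" and qs :: "nat \<Rightarrow> int"
  assumes T: "\<And>n. T n \<in> sets borel" "\<And>n. T n \<subseteq> unit_cube"
    and converges: "(\<Sum>n. emeasure lborel (T n)) < \<infinity>"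
  shows "emeasure lborel (limsup (\<lambda>n. hit_set (qs n) (T n))) = 0"
proof -
  have "summable (\<lambda>n. measure lborel (hit_set (qs n) (T n)))"
    using converges emeasure_hit_set_finite[OF T] emeasure_hit_set[OF T]
    by (subst summable_measure_iff) simp_all
  then have "limsup (\<lambda>n. hit_set (qs n) (T n)) \<in> null_sets lborel"
    using emeasure_hit_set_finite[OF T] T
    by (intro borel_cantelli_limsup1) (auto simp: less_top)
  then show ?thesis by auto
qed

text \<open>Divergence case: on the unit square, viewed as a probability space, hit sets with
  distinct multipliers are pairwise independent, so the pairwise Borel--Cantelli lemma
  applies.\<close>
lemma emeasure_limsup_hit_sets_1:
  fixes T :: "nat \<Rightarrow> (real ^ 'n) set" and qs :: "nat \<Rightarrow> int"
  assumes T: "\<And>n. T n \<in> sets borel" "\<And>n. T n \<subseteq> unit_cube"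
    and "inj qs"
    and diverges: "(\<Sum>n. emeasure lborel (T n)) = \<infinity>"
  shows "emeasure lborel (limsup (\<lambda>n. hit_set (qs n) (T n))) = 1"
proof -
  define Q where "Q = (unit_cube :: (real ^ 'n) set) \<times> (unit_cube :: (real ^ 'n) set)"
  define Ev where "Ev n = hit_set (qs n) (T n)" for n
  define M where "M = restrict_space lborel Q"
  have Q: "Q \<in> sets lborel" unfolding Q_def by (simp add: borel_Times)
  have Ev_Q: "Ev n \<subseteq> Q" for n unfolding Ev_def Q_def by (rule hit_set_subset)
  have measure_M: "measure M X = measure lborel X" if "X \<subseteq> Q" for X
    unfolding M_def using Q that by (intro measure_restrict_space) auto
  interpret M: prob_space M
    using Q unfolding M_def by (intro prob_space_restrict_space) (auto simp: Q_def emeasure_unit_cube_square)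
  have events: "Ev n \<in> M.events" for n
    using Ev_Q Q T unfolding M_def Ev_def by (simp add: sets_restrict_space_iff)
  have prob_Ev: "M.prob (Ev n) = measure lborel (T n)" for n
    using measure_M[OF Ev_Q] T by (simp add: measure_def Ev_def emeasure_hit_set)
  have indep: "M.prob (Ev i \<inter> Ev j) = M.prob (Ev i) * M.prob (Ev j)" if "i \<noteq> j" for i j
  proof -
    have "qs i \<noteq> qs j" using \<open>inj qs\<close> that by (auto dest: injD)
    then have "measure lborel (Ev i \<inter> Ev j) = measure lborel (T i) * measure lborel (T j)"
      using T by (simp add: Ev_def measure_def emeasure_hit_set_Int enn2real_mult)
    then show ?thesis using Ev_Q by (simp add: measure_M prob_Ev Int_absorb2 le_infI1)
  qed
  have "emeasure lborel (T n) \<noteq> \<infinity>" for n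
    using emeasure_subset_unit_cube[OF T(2)[of n] T(1)[of n]]
    by (metis ennreal_one_neq_top infinity_ennreal_def neq_top_trans)
  from summable_measure_iff[OF this] diverges
  have "\<not> summable (\<lambda>n. M.prob (Ev n))"
    unfolding prob_Ev by simp
  then have "emeasure M (limsup Ev) = 1"
    by (intro M.pairwise_independent_borel_cantelli[where Ev=Ev] events indep)
  have "limsup Ev \<subseteq> Q"
  proof
    fix p assume "p \<in> limsup Ev"
    then obtain n where "p \<in> Ev n" by (auto simp: limsup_INF_SUP)
    then show "p \<in> Q" using Ev_Q by blast
  qed
  then have "emeasure lborel (limsup Ev) = emeasure M (limsup Ev)"
    unfolding M_def using Q by (intro emeasure_restrict_space[symmetric]) auto
  also have "\<dots> = 1" by fact
  finally show ?thesis
    unfolding Ev_def[abs_def] .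
qed

section \<open>From Lebesgue to Borel targets\<close>

lemma lebesgue_set_borel_between:
  fixes S :: "'a :: euclidean_space set"
  assumes "S \<in> sets lebesgue" "S \<subseteq> U" "U \<in> sets borel"
  obtains C B where "C \<in> sets borel" "B \<in> sets borel" "C \<subseteq> S" "S \<subseteq> B" "B \<subseteq> U"
    "emeasure lborel (B - C) = 0"
proof -
  obtain C N N' where SCN: "S = C \<union> N" "N \<subseteq> N'" "N' \<in> null_sets lborel" "C \<in> sets lborel"
    using assms(1) by (auto elim: sets_completionE)
  have "(C \<union> N') \<inter> U - C \<in> null_sets lborel"
    by (rule null_sets_subset[OF SCN(3)]) (use SCN(3,4) assms(3) in auto)
  then show ?thesis
    using SCN assms(2,3) by (intro that[of C "(C \<union> N') \<inter> U"]) auto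
qed

lemma lebesgue_set_squeezed:
  fixes X :: "'a :: euclidean_space set"
  assumes C: "C \<in> sets borel" and B: "B \<in> sets borel" and "C \<subseteq> X" "X \<subseteq> B"
    and null: "emeasure lborel (B - C) = 0"
  shows "X \<in> sets lebesgue" "emeasure lebesgue X = emeasure lborel C"
proof -
  have BC: "B - C \<in> null_sets lborel" using null B C by auto
  show X: "X \<in> sets lebesgue"
    using \<open>C \<subseteq> X\<close> \<open>X \<subseteq> B\<close> BC C by (intro sets_completionI[of X C "X - C" "B - C"]) auto
  have "emeasure lborel B \<le> emeasure lborel (C \<union> (B - C))"
    using B C by (intro emeasure_mono) auto
  also have "\<dots> \<le> emeasure lborel C + emeasure lborel (B - C)"
    using B C by (intro emeasure_subadditive) auto
  finally have "emeasure lborel B \<le> emeasure lborel C" using null by simp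
  moreover have "emeasure lborel C \<le> emeasure lborel B"
    using \<open>C \<subseteq> X\<close> \<open>X \<subseteq> B\<close> B by (intro emeasure_mono) auto
  ultimately have BC_eq: "emeasure lborel B = emeasure lborel C" by (rule antisym)
  have "emeasure lebesgue C \<le> emeasure lebesgue X"
    using X \<open>C \<subseteq> X\<close> by (intro emeasure_mono) auto
  moreover have "emeasure lebesgue X \<le> emeasure lebesgue B"
    using B \<open>X \<subseteq> B\<close> by (intro emeasure_mono) auto
  ultimately show "emeasure lebesgue X = emeasure lborel C" using BC_eq B C by (simp add: antisym)
qed

lemma limsup_hit_sets_mono:
  assumes "\<And>n. C n \<subseteq> B n"
  shows "limsup (\<lambda>n. hit_set (qs n) (C n)) \<subseteq> limsup (\<lambda>n. hit_set (qs n) (B n))"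
proof
  fix p assume "p \<in> limsup (\<lambda>n. hit_set (qs n) (C n))"
  then have "\<exists>\<^sub>F n in sequentially. p \<in> hit_set (qs n) (C n)" by (simp add: mem_limsup_iff)
  then have "\<exists>\<^sub>F n in sequentially. p \<in> hit_set (qs n) (B n)"
    by (rule frequently_elim1) (use hit_set_mono[OF assms] in blast)
  then show "p \<in> limsup (\<lambda>n. hit_set (qs n) (B n))" by (simp add: mem_limsup_iff)
qed

lemma emeasure_limsup_hit_sets_diff:
  fixes C B :: "nat \<Rightarrow> (real ^ 'n) set" and qs :: "nat \<Rightarrow> int"
  assumes [measurable]: "\<And>n. C n \<in> sets borel" "\<And>n. B n \<in> sets borel"
    and "\<And>n. C n \<subseteq> B n" "\<And>n. B n \<subseteq> unit_cube"
    and null: "\<And>n. emeasure lborel (B n - C n) = 0"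
  shows "emeasure lborel (limsup (\<lambda>n. hit_set (qs n) (B n)) - limsup (\<lambda>n. hit_set (qs n) (C n))) = 0"
proof -
  have "limsup (\<lambda>n. hit_set (qs n) (B n)) - limsup (\<lambda>n. hit_set (qs n) (C n))
      \<subseteq> (\<Union>n. hit_set (qs n) (B n - C n))"
  proof
    fix p assume "p \<in> limsup (\<lambda>n. hit_set (qs n) (B n)) - limsup (\<lambda>n. hit_set (qs n) (C n))"
    then have "\<exists>\<^sub>F n in sequentially. p \<in> hit_set (qs n) (B n)"
      "\<forall>\<^sub>F n in sequentially. p \<notin> hit_set (qs n) (C n)"
      by (auto simp: mem_limsup_iff not_frequently)
    then have "\<exists>\<^sub>F n in sequentially. p \<in> hit_set (qs n) (B n) \<and> p \<notin> hit_set (qs n) (C n)"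
      by (rule frequently_eventually_frequently)
    then obtain n where "p \<in> hit_set (qs n) (B n)" "p \<notin> hit_set (qs n) (C n)"
      by (auto elim: frequentlyE)
    then show "p \<in> (\<Union>n. hit_set (qs n) (B n - C n))" by (auto simp: hit_set_Diff)
  qed
  moreover have "(\<Union>n. hit_set (qs n) (B n - C n)) \<in> null_sets lborel"
  proof (intro null_sets_UN null_setsI)
    show "emeasure lborel (hit_set (qs n) (B n - C n)) = 0" for n
      using assms by (subst emeasure_hit_set) (auto simp: null)
  qed measurable
  ultimately show ?thesis
    by (intro null_sets_subset[THEN null_setsD1]) measurable
qed

lemma infinite_Suc_iff_frequently:
  "infinite {q::nat. q \<ge> 1 \<and> P q} \<longleftrightarrow> (\<exists>\<^sub>F n in sequentially. P (Suc n))"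
proof -
  have "{q::nat. q \<ge> 1 \<and> P q} = Suc ` {n. P (Suc n)}"
    by (auto simp: image_iff Suc_le_eq gr0_conv_Suc)
  then show ?thesis
    by (simp add: finite_image_iff frequently_cofinite[symmetric] cofinite_eq_sequentially)
qed

lemma set_eq_limsup_hit_sets:
  fixes As :: "nat \<Rightarrow> (real ^ 'n) set"
  assumes "\<And>q. q \<ge> 1 \<Longrightarrow> As q \<subseteq> unit_cube"
  shows "{(x, \<gamma>). x \<in> unit_cube \<and> \<gamma> \<in> unit_cube \<and>
      infinite {q. q \<ge> 1 \<and> (\<exists>p\<in>int_vecs. of_nat q *\<^sub>R x - \<gamma> - p \<in> As q)}}
    = limsup (\<lambda>n. hit_set (int (Suc n)) (As (Suc n)))"
proof (intro set_eqI)
  fix p :: "(real ^ 'n) \<times> (real ^ 'n)"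
  obtain x \<gamma> where p: "p = (x, \<gamma>)" by fastforce
  have "{q. q \<ge> 1 \<and> (\<exists>p\<in>int_vecs. of_nat q *\<^sub>R x - \<gamma> - p \<in> As q)}
      = {q. q \<ge> 1 \<and> frac_vec (of_nat q *\<^sub>R x - \<gamma>) \<in> As q}"
    using ex_int_vecs_iff_frac_vec[OF assms] by blast
  moreover have "infinite {q. q \<ge> 1 \<and> frac_vec (of_nat q *\<^sub>R x - \<gamma>) \<in> As q}
      \<longleftrightarrow> (\<exists>\<^sub>F n in sequentially. frac_vec (of_nat (Suc n) *\<^sub>R x - \<gamma>) \<in> As (Suc n))"
    by (rule infinite_Suc_iff_frequently)
  moreover have "p \<in> limsup (\<lambda>n. hit_set (int (Suc n)) (As (Suc n))) \<longleftrightarrow> x \<in> unit_cube \<and> \<gamma> \<in> unit_cube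
      \<and> (\<exists>\<^sub>F n in sequentially. frac_vec (of_nat (Suc n) *\<^sub>R x - \<gamma>) \<in> As (Suc n))"
    unfolding p mem_limsup_iff hit_set_def by simp
  ultimately show "p \<in> {(x, \<gamma>). x \<in> unit_cube \<and> \<gamma> \<in> unit_cube \<and>
      infinite {q. q \<ge> 1 \<and> (\<exists>p\<in>int_vecs. of_nat q *\<^sub>R x - \<gamma> - p \<in> As q)}}
    \<longleftrightarrow> p \<in> limsup (\<lambda>n. hit_set (int (Suc n)) (As (Suc n)))"
    unfolding p by simp
qed

theorem theorem6p1:
  fixes As :: "nat \<Rightarrow> (real ^ 'n) set"
    and A :: "((real ^ 'n) \<times> (real ^ 'n)) set"
  assumes meas: "\<And>q. q \<ge> 1 \<Longrightarrow> As q \<in> sets lebesgue"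
    and sub: "\<And>q. q \<ge> 1 \<Longrightarrow> As q \<subseteq> unit_cube"
    and A_def: "A = {(x, \<gamma>). x \<in> unit_cube \<and> \<gamma> \<in> unit_cube \<and>
        infinite {q. q \<ge> 1 \<and> (\<exists>p\<in>int_vecs. of_nat q *\<^sub>R x - \<gamma> - p \<in> As q)}}"
  shows "A \<in> sets lebesgue
    \<and> ((\<Sum>r. emeasure lebesgue (As (Suc r))) < \<infinity> \<longrightarrow> emeasure lebesgue A = 0)
    \<and> ((\<Sum>r. emeasure lebesgue (As (Suc r))) = \<infinity> \<longrightarrow> emeasure lebesgue A = 1)"
proof -
  have "\<forall>n. \<exists>C B. C \<in> sets borel \<and> B \<in> sets borel \<and> C \<subseteq> As (Suc n) \<and> As (Suc n) \<subseteq> B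
      \<and> B \<subseteq> unit_cube \<and> emeasure lborel (B - C) = 0"
    using lebesgue_set_borel_between[OF meas sub] by (metis le_add1 plus_1_eq_Suc unit_cube_borel)
  then obtain C B where C: "\<And>n. C n \<in> sets borel" "\<And>n. C n \<subseteq> As (Suc n)"
    and B: "\<And>n. B n \<in> sets borel" "\<And>n. As (Suc n) \<subseteq> B n" "\<And>n. B n \<subseteq> unit_cube"
    and null: "\<And>n. emeasure lborel (B n - C n) = 0"
    by metis
  define hits where "hits T = limsup (\<lambda>n. hit_set (int (Suc n)) (T n))" for T :: "nat \<Rightarrow> (real ^ 'n) set"
  have A_hits: "A = hits (\<lambda>n. As (Suc n))"
    unfolding A_def hits_def using set_eq_limsup_hit_sets[OF sub] by simp
  have "hits C \<subseteq> A" "A \<subseteq> hits B"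
    unfolding A_hits hits_def using C(2) B(2) by (simp_all add: limsup_hit_sets_mono)
  moreover have "hits C \<in> sets borel" "hits B \<in> sets borel"
    unfolding hits_def using C(1) B(1) by measurable
  moreover have "emeasure lborel (hits B - hits C) = 0"
    unfolding hits_def using C(1,2) B null by (intro emeasure_limsup_hit_sets_diff) blast+
  ultimately have A: "A \<in> sets lebesgue" "emeasure lebesgue A = emeasure lborel (hits C)"
    using lebesgue_set_squeezed by blast+
  have sums: "(\<Sum>r. emeasure lebesgue (As (Suc r))) = (\<Sum>r. emeasure lborel (C r))"
    using lebesgue_set_squeezed(2)[OF C(1) B(1) C(2) B(2) null] by simp
  have C_cube: "\<And>n. C n \<subseteq> unit_cube" using C(2) B(2,3) by blast
  have inj: "inj (\<lambda>n. int (Suc n))" by (simp add: inj_def)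
  show ?thesis
    using A sums emeasure_limsup_hit_sets_0[OF C(1) C_cube] emeasure_limsup_hit_sets_1[OF C(1) C_cube inj]
    unfolding hits_def by simp
qed

end
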